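(* Let $\lambda_1,\lambda_2$ be as in the context. For any $(c,\theta)\in\Omega$ and any $B\in[\lambda_2^2,\lambda_1^2]$ we have $$c^2+2\cos\theta\,B-\frac{\sin^2\theta}{c^2}B^2>0.$$
   Context: Either $\lambda_1>\lambda_2>0$ or $\lambda_1=\lambda_2=1$. For $c>0$ put $\theta_c^+=\pi$ if $c>\sqrt2\lambda_1$ and $\theta_c^+=\arccos(1-c^2/\lambda_1^2)\in(0,\pi]$ if $0<c\le\sqrt2\lambda_1$. $\Omega=\{(c,\theta)\in\mathbb{R}^2: c>0,\ \theta\in(-\theta_c^+,\theta_c^+)\}$. *)

theory Defs
  imports "HOL-Analysis.Analysis"
begin

definition lambda_ok :: "real \<Rightarrow> real \<Rightarrow> bool" where
  "lambda_ok l1 l2 \<longleftrightarrow> (l1 > l2 \<and> l2 > 0) \<or> (l1 = 1 \<and> l2 = 1)"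

definition theta_plus :: "real \<Rightarrow> real \<Rightarrow> real" where
  "theta_plus l1 c = (if c > sqrt 2 * l1 then pi else arccos (1 - c^2 / l1^2))"

definition Omega :: "real \<Rightarrow> (real \<times> real) set" where
  "Omega l1 = {(c, \<theta>). c > 0 \<and> - theta_plus l1 c < \<theta> \<and> \<theta> < theta_plus l1 c}"

end

theory Submission
  imports Defs
begin

text \<open>Multiplied by \<open>c\<^sup>2\<close>, the expression factors as
  \<open>(c\<^sup>2 + B (1 + cos \<theta>)) (c\<^sup>2 - B (1 - cos \<theta>))\<close>. The first factor is positive
  since \<open>B > 0\<close>. For the second, on \<open>\<Omega>\<close> we have
  \<open>cos \<theta> > 1 - c\<^sup>2/\<lambda>\<^sub>1\<^sup>2\<close>, i.e. \<open>\<lambda>\<^sub>1\<^sup>2 (1 - cos \<theta>) < c\<^sup>2\<close>, and \<open>B \<le> \<lambda>\<^sub>1\<^sup>2\<close>.\<close>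

lemma theta_plus_le_pi_and_cos_ge:
  fixes l1 c :: real
  assumes "l1 > 0" and "c > 0"
  shows "theta_plus l1 c \<le> pi" and "1 - c^2 / l1^2 \<le> cos (theta_plus l1 c)"
proof -
  have "theta_plus l1 c \<le> pi \<and> 1 - c^2 / l1^2 \<le> cos (theta_plus l1 c)"
  proof (cases "c > sqrt 2 * l1")
    case True
    have "(sqrt 2 * l1)^2 < c^2"
      using True assms by (intro power_strict_mono) auto
    then have "2 * l1^2 < c^2" by (simp add: power_mult_distrib)
    then have "1 - c^2 / l1^2 \<le> -1" using assms by (simp add: field_simps)
    then show ?thesis using True by (simp add: theta_plus_def)
  next
    case False
    have "c^2 \<le> (sqrt 2 * l1)^2"
      using False assms by (intro power_mono) auto
    then have "c^2 \<le> 2 * l1^2" by (simp add: power_mult_distrib)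
    then have lower: "-1 \<le> 1 - c^2 / l1^2" using assms by (simp add: field_simps)
    have upper: "1 - c^2 / l1^2 \<le> 1" by simp
    show ?thesis
      using False arccos_ubound[OF lower upper] cos_arccos[OF lower upper]
      by (simp add: theta_plus_def)
  qed
  then show "theta_plus l1 c \<le> pi" and "1 - c^2 / l1^2 \<le> cos (theta_plus l1 c)"
    by auto
qed

lemma Omega_imp_cos_gt:
  fixes l1 c \<theta> :: real
  assumes "l1 > 0" and "(c, \<theta>) \<in> Omega l1"
  shows "1 - c^2 / l1^2 < cos \<theta>"
proof -
  have c: "c > 0" and \<theta>: "\<bar>\<theta>\<bar> < theta_plus l1 c"
    using assms(2) by (auto simp: Omega_def)
  note theta_plus = theta_plus_le_pi_and_cos_ge[OF assms(1) c]
  have "cos (theta_plus l1 c) < cos \<bar>\<theta>\<bar>"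
    using \<theta> theta_plus(1) by (intro cos_monotone_0_pi) auto
  then show ?thesis using theta_plus(2) by simp
qed

lemma sin_cos_quadratic_factorization:
  fixes c \<theta> B :: real
  assumes "c \<noteq> 0"
  shows "c^2 * (c^2 + 2 * cos \<theta> * B - (sin \<theta>)^2 / c^2 * B^2)
    = (c^2 + B * (1 + cos \<theta>)) * (c^2 - B * (1 - cos \<theta>))"
  using assms unfolding sin_squared_eq by (simp add: field_simps power2_eq_square)

theorem lemma5p1:
  fixes l1 l2 c \<theta> B :: real
  assumes "lambda_ok l1 l2"
    and "(c, \<theta>) \<in> Omega l1"
    and "l2^2 \<le> B" and "B \<le> l1^2"
  shows "c^2 + 2 * cos \<theta> * B - (sin \<theta>)^2 / c^2 * B^2 > 0"
proof -
  have "l2 > 0" and l1: "l1 > 0" using assms(1) by (auto simp: lambda_ok_def)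
  then have B: "B > 0" using assms(3) by (meson order_less_le_trans zero_less_power)
  have c: "c > 0" using assms(2) by (simp add: Omega_def)
  have "l1^2 * (1 - cos \<theta>) < c^2"
    using Omega_imp_cos_gt[OF l1 assms(2)] l1 by (simp add: field_simps)
  moreover have "B * (1 - cos \<theta>) \<le> l1^2 * (1 - cos \<theta>)"
    using assms(4) cos_le_one[of \<theta>] by (intro mult_right_mono) auto
  ultimately have second: "c^2 - B * (1 - cos \<theta>) > 0" by simp
  have "1 + cos \<theta> \<ge> 0" using cos_ge_minus_one[of \<theta>] by linarith
  then have "B * (1 + cos \<theta>) \<ge> 0" using B by simp
  then have first: "c^2 + B * (1 + cos \<theta>) > 0" using c by (simp add: add_pos_nonneg)
  have "c^2 * (c^2 + 2 * cos \<theta> * B - (sin \<theta>)^2 / c^2 * B^2) > 0"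
    using sin_cos_quadratic_factorization[of c] c first second by simp
  then show ?thesis using c by (simp add: zero_less_mult_iff)
qed

end
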